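(* Let $N\ge 3$, $p\ge 1$, and let $E_N$ be the minimal cost of a Hamiltonian cycle on $N$ points drawn independently and uniformly in $[0,1]$. Then $$\mathbb E[E_N]=\big[(N-2)(p+1)+2\big]\frac{\Gamma(N+1)\,\Gamma(p+1)}{\Gamma(N+p+1)},$$ and consequently $\lim_{N\to\infty}N^{p-1}\,\mathbb E[E_N]=\Gamma(p+2)$.
   Context: For points $x_1,\dots,x_N\in[0,1]$ forming the vertices of the complete graph $\mathcal K_N$, the weight of the edge $\{x_i,x_j\}$ is $|x_i-x_j|^p$ and the cost of a Hamiltonian cycle is the sum of its edge weights; $E_N$ is the minimum of this cost over all Hamiltonian cycles. *)

theory Defs
  imports "HOL-Probability.Probability" "HOL-Combinatorics.Permutations"
begin

definition cycle_cost :: "real \<Rightarrow> nat \<Rightarrow> (nat \<Rightarrow> real) \<Rightarrow> (nat \<Rightarrow> nat) \<Rightarrow> real" where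
  "cycle_cost p N x \<sigma> = (\<Sum>i<N. \<bar>x (\<sigma> i) - x (\<sigma> ((i + 1) mod N))\<bar> powr p)"

definition min_cycle_cost :: "real \<Rightarrow> nat \<Rightarrow> (nat \<Rightarrow> real) \<Rightarrow> real" where
  "min_cycle_cost p N x = Min {cycle_cost p N x \<sigma> | \<sigma>. \<sigma> permutes {..<N}}"

definition unif_points :: "nat \<Rightarrow> (nat \<Rightarrow> real) measure" where
  "unif_points N = PiM {..<N} (\<lambda>_. uniform_measure lborel {0..1::real})"

definition expected_min_cost :: "real \<Rightarrow> nat \<Rightarrow> real" where
  "expected_min_cost p N = (\<integral>x. min_cycle_cost p N x \<partial>unif_points N)"

end

theory Submission
  imports Defs
begin

text \<open>For p \<ge> 1 an optimal tour through sorted points z0 < ... < z(N-1) of the line is the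
  zigzag tour that climbs through every other point and descends through the remaining ones:
  inserting the largest point between the two largest of the others is never more expensive than
  inserting it anywhere else, by convexity of t \<mapsto> t powr p. The edges of the zigzag tour are
  the pairs of sorted positions (i, i + 2) together with (0, 1) and (N - 2, N - 1), so its cost
  is a sum over ordered pairs of points of \<bar>x a - x b\<bar> powr p times an indicator describing
  how the remaining points lie around x a and x b. Given x a = s < x b = t, these indicators have
  binomial probabilities in t - s, t and 1 - s; integrating over s and t produces Beta integrals,
  and the N (N - 1) equal pair contributions give the closed form. Its growth follows from
  N! N powr p / Gamma (N + p + 1) \<longrightarrow> 1.\<close>

section \<open>Optimal tours through points of the line\<close>

lemma powr_add_diff_mono:
  fixes u v w p :: real
  assumes "0 \<le> w" "w \<le> v" "0 \<le> u" "p \<ge> 1"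
  shows "(u + w) powr p - w powr p \<le> (u + v) powr p - v powr p"
proof -
  let ?h = "\<lambda>y. (u + y) powr p - y powr p"
  have "?h w \<le> ?h v"
  proof (rule DERIV_nonneg_imp_increasing_open[OF assms(2)])
    fix y assume y: "w < y" "y < v"
    hence pos: "y > 0" "u + y > 0" using assms by auto
    have "DERIV ?h y :> p * (u + y) powr (p - 1) * 1 - p * y powr (p - 1)"
      by (rule derivative_eq_intros has_real_derivative_powr[THEN DERIV_chain2] | use pos in simp)+
    moreover have "p * y powr (p - 1) \<le> p * (u + y) powr (p - 1)"
      using pos assms by (intro mult_left_mono powr_mono2) auto
    ultimately show "\<exists>d. DERIV ?h y :> d \<and> d \<ge> 0" by fastforce
  next
    show "continuous_on {w..v} ?h"
      using assms by (intro continuous_intros continuous_on_powr') auto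
  qed
  thus ?thesis by simp
qed

lemma powr_add_superadditive:
  fixes a b p :: real
  assumes "0 \<le> a" "0 \<le> b" "p \<ge> 1"
  shows "a powr p + b powr p \<le> (a + b) powr p"
  using powr_add_diff_mono[of 0 b a p] assms by simp

text \<open>Replacing the edge between the two largest points c, d below m by the detour through m
  is never more expensive than inserting m into an edge between points a \<le> b, where b = c or b \<le> d.\<close>
lemma powr_insertion_ineq:
  fixes p m c d a b :: real
  assumes p: "p \<ge> 1" and "d \<le> c" "c \<le> m" "a \<le> d" "a \<le> b" "b \<le> m" and b: "b = c \<or> b \<le> d"
  shows "(m - c) powr p + (m - d) powr p - (c - d) powr p \<le> (m - a) powr p + (m - b) powr p - (b - a) powr p"
  using b
proof
  assume "b = c"
  moreover have "(m - c + (c - d)) powr p - (c - d) powr p \<le> (m - c + (c - a)) powr p - (c - a) powr p"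
    using assms by (intro powr_add_diff_mono) auto
  ultimately show ?thesis by simp
next
  assume "b \<le> d"
  have "(m - b) powr p + (b - a) powr p \<le> (m - a) powr p"
    using powr_add_superadditive[of "m - b" "b - a" p] assms by simp
  moreover have "(m - c) powr p \<le> (m - d) powr p" "(m - d) powr p \<le> (m - b) powr p"
    using assms \<open>b \<le> d\<close> by (auto intro: powr_mono2)
  ultimately show ?thesis by (smt (verit) powr_ge_zero)
qed

definition edge_cost :: "real \<Rightarrow> real \<Rightarrow> real \<Rightarrow> real" where
  "edge_cost p a b = \<bar>a - b\<bar> powr p"

lemma edge_cost_sym: "edge_cost p a b = edge_cost p b a"
  unfolding edge_cost_def by (simp add: abs_minus_commute)

fun path_cost :: "real \<Rightarrow> real list \<Rightarrow> real" where
  "path_cost p (x # y # ys) = edge_cost p x y + path_cost p (y # ys)"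
| "path_cost p _ = 0"

definition tour_cost :: "real \<Rightarrow> real list \<Rightarrow> real" where
  "tour_cost p xs = path_cost p xs + edge_cost p (last xs) (hd xs)"

text \<open>For sorted z this is the cost of the tour z0, z2, z4, ..., z5, z3, z1, which climbs
  through every other point and descends through the remaining ones.\<close>
definition zigzag_cost :: "real \<Rightarrow> real list \<Rightarrow> real" where
  "zigzag_cost p z = edge_cost p (z!0) (z!1) + edge_cost p (z!(length z - 1)) (z!(length z - 2))
     + (\<Sum>i<length z - 2. edge_cost p (z!i) (z!(i+2)))"

lemma path_cost_eq_sum: "path_cost p xs = (\<Sum>i<length xs - 1. edge_cost p (xs!i) (xs!(Suc i)))"
proof (induction p xs rule: path_cost.induct)
  case (1 p x y ys)
  then show ?case by (simp add: sum.lessThan_Suc_shift del: sum.lessThan_Suc)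
qed auto

lemma tour_cost_eq_sum:
  assumes "xs \<noteq> []"
  shows "tour_cost p xs = (\<Sum>i<length xs. edge_cost p (xs!i) (xs!((i + 1) mod length xs)))"
proof -
  obtain n where n: "length xs = Suc n" using assms by (cases xs) auto
  have "(\<Sum>i<n. edge_cost p (xs!i) (xs!((i + 1) mod length xs))) = path_cost p xs"
    using n by (simp add: path_cost_eq_sum)
  moreover have "xs!n = last xs" "xs!0 = hd xs"
    using n assms by (simp_all add: last_conv_nth hd_conv_nth)
  ultimately show ?thesis using n by (simp add: tour_cost_def)
qed

lemma path_cost_snoc: "xs \<noteq> [] \<Longrightarrow> path_cost p (xs @ [m]) = path_cost p xs + edge_cost p (last xs) m"
  by (induction p xs rule: path_cost.induct) auto

lemma tour_cost_snoc:
  "xs \<noteq> [] \<Longrightarrow> tour_cost p (xs @ [m])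
     = tour_cost p xs - edge_cost p (last xs) (hd xs) + edge_cost p (last xs) m + edge_cost p m (hd xs)"
  by (simp add: tour_cost_def path_cost_snoc)

lemma tour_cost_rotate1: "tour_cost p (rotate1 xs) = tour_cost p xs"
proof (cases xs)
  case (Cons x ys)
  show ?thesis
  proof (cases ys)
    case (Cons y zs)
    have "path_cost p ((y # zs) @ [x]) = path_cost p (y # zs) + edge_cost p (last (y # zs)) x"
      by (rule path_cost_snoc) simp
    with \<open>xs = x # ys\<close> Cons show ?thesis by (simp add: tour_cost_def edge_cost_sym)
  qed (simp add: Cons)
qed simp

lemma tour_cost_rotate: "tour_cost p (rotate k xs) = tour_cost p xs"
  by (induction k) (simp_all add: rotate_Suc tour_cost_rotate1)

lemma path_cost_rev: "path_cost p (rev xs) = path_cost p xs"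
proof (induction p xs rule: path_cost.induct)
  case (1 p x y ys)
  have "path_cost p (rev (y # ys) @ [x]) = path_cost p (rev (y # ys)) + edge_cost p y x"
    by (subst path_cost_snoc) (auto simp: last_rev)
  with 1 show ?case by (simp add: edge_cost_sym)
qed auto

lemma tour_cost_rev: "tour_cost p (rev xs) = tour_cost p xs"
  by (cases "xs = []") (simp_all add: tour_cost_def path_cost_rev hd_rev last_rev edge_cost_sym)

lemma tour_cost_two: "tour_cost p [a, b] = 2 * edge_cost p a b"
  by (simp add: tour_cost_def edge_cost_sym)

lemma zigzag_cost_two: "length z = 2 \<Longrightarrow> zigzag_cost p z = 2 * edge_cost p (z!0) (z!1)"
  by (simp add: zigzag_cost_def edge_cost_sym)

lemma zigzag_cost_snoc:
  assumes "length z \<ge> 2"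
  shows "zigzag_cost p (z @ [m]) = zigzag_cost p z + edge_cost p m (z!(length z - 1))
           + edge_cost p m (z!(length z - 2)) - edge_cost p (z!(length z - 1)) (z!(length z - 2))"
proof -
  obtain n where n: "length z = n + 2" using assms by (metis add.commute le_Suc_ex)
  have "(\<Sum>i<n + 1. edge_cost p ((z @ [m])!i) ((z @ [m])!(i+2)))
      = (\<Sum>i<n. edge_cost p (z!i) (z!(i+2))) + edge_cost p (z!n) m"
    using n by (auto simp: nth_append intro: sum.cong)
  then show ?thesis
    using n by (simp add: zigzag_cost_def nth_append edge_cost_sym numeral_2_eq_2)
qed

lemma sorted_two_largest_cases:
  fixes z :: "real list"
  assumes s: "sorted (z @ [d, c])" and sub: "{#u, v#} \<subseteq># mset (z @ [d, c])" and "u \<le> v"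
  shows "u \<le> d \<and> (v = c \<or> v \<le> d)"
proof -
  have z_le_d: "\<forall>y\<in>set z. y \<le> d" and "d \<le> c" using s by (auto simp: sorted_append)
  have "w \<le> d \<or> w = c" if "w \<in># {#u, v#}" for w
    using mset_subset_eqD[OF sub that] z_le_d by auto
  then have uv: "u \<le> d \<or> u = c" "v \<le> d \<or> v = c" by auto
  show ?thesis
  proof (cases "u \<le> d")
    case False
    then have "u = c" "v = c" "d < c" using uv \<open>u \<le> v\<close> \<open>d \<le> c\<close> by auto
    then have "count {#u, v#} c = 2" "count (mset (z @ [d, c])) c = 1"
      using z_le_d by (auto simp: count_mset_0_iff)
    moreover have "count {#u, v#} c \<le> count (mset (z @ [d, c])) c"
      using sub by (simp add: subseteq_mset_def)
    ultimately show ?thesis by simp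
  qed (use uv in auto)
qed

lemma zigzag_cost_snoc_le:
  assumes p: "p \<ge> 1" and s: "sorted (z @ [m])" and z: "length z \<ge> 2" and sub: "{#u, v#} \<subseteq># mset z"
  shows "zigzag_cost p (z @ [m]) - zigzag_cost p z \<le> edge_cost p v m + edge_cost p m u - edge_cost p v u"
proof -
  obtain z' d c where zdc: "z = z' @ [d, c]"
  proof -
    obtain z1 c where "z = z1 @ [c]" using z by (cases z rule: rev_cases) auto
    moreover obtain z' d where "z1 = z' @ [d]"
      using z \<open>z = z1 @ [c]\<close> by (cases z1 rule: rev_cases) auto
    ultimately show ?thesis using that by simp
  qed
  have le_m: "y \<le> m" if "y \<in> set z" for y using s that by (auto simp: sorted_append)
  have "d \<le> c" "c \<le> m" using s zdc by (auto simp: sorted_append)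
  have "u \<in># mset z" "v \<in># mset z" using mset_subset_eqD[OF sub] by auto
  then have uv_m: "u \<le> m" "v \<le> m" using le_m by auto
  have "min u v \<le> d \<and> (max u v = c \<or> max u v \<le> d)"
    using sorted_two_largest_cases[of z' d c "min u v" "max u v"] s sub zdc
    by (cases "u \<le> v") (auto simp: sorted_append add_mset_commute)
  then have "(m - c) powr p + (m - d) powr p - (c - d) powr p
      \<le> (m - min u v) powr p + (m - max u v) powr p - (max u v - min u v) powr p"
    using powr_insertion_ineq[OF p \<open>d \<le> c\<close> \<open>c \<le> m\<close>, of "min u v" "max u v"] uv_m by auto
  moreover have "edge_cost p v m + edge_cost p m u - edge_cost p v u
      = (m - min u v) powr p + (m - max u v) powr p - (max u v - min u v) powr p"
    using uv_m by (cases "u \<le> v") (auto simp: edge_cost_def abs_minus_commute min_def max_def)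
  ultimately show ?thesis
    using zigzag_cost_snoc[OF z, of p m] \<open>d \<le> c\<close> \<open>c \<le> m\<close> zdc
    by (simp add: edge_cost_def nth_append abs_minus_commute)
qed

lemma zigzag_cost_sort_le_tour_cost:
  assumes p: "p \<ge> 1"
  shows "length xs \<ge> 2 \<Longrightarrow> zigzag_cost p (sort xs) \<le> tour_cost p xs"
proof (induction "length xs" arbitrary: xs rule: less_induct)
  case less
  show ?case
  proof (cases "length xs = 2")
    case True
    then obtain a b where "xs = [a, b]" by (auto simp: numeral_2_eq_2 length_Suc_conv)
    then show ?thesis by (auto simp: zigzag_cost_two tour_cost_two edge_cost_sym)
  next
    case False
    define m where "m = Max (set xs)"
    have "m \<in> set xs" using less.prems unfolding m_def by (intro Max_in) auto
    then obtain A B where xs: "xs = A @ m # B" by (meson split_list)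
    define ys where "ys = B @ A"
    have ys: "length ys \<ge> 2" "length ys < length xs" "ys \<noteq> []"
      using less.prems False xs by (auto simp: ys_def)
    have "set ys \<subseteq> set xs" using xs by (auto simp: ys_def)
    then have ys_le_m: "\<forall>y\<in>set ys. y \<le> m" unfolding m_def by (meson Max_ge List.finite_set subsetD)
    have "rotate (length (A @ [m])) ((A @ [m]) @ B) = ys @ [m]"
      unfolding ys_def by (metis rotate_append append_assoc)
    then have rot: "tour_cost p xs = tour_cost p (ys @ [m])"
      using xs by (metis tour_cost_rotate append_assoc append_Cons append_Nil)
    have sort_xs: "sort xs = sort ys @ [m]"
      by (rule properties_for_sort) (use xs ys_le_m in \<open>auto simp: ys_def sorted_append\<close>)
    have "zigzag_cost p (sort ys @ [m]) - zigzag_cost p (sort ys)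
        \<le> edge_cost p (last ys) m + edge_cost p m (hd ys) - edge_cost p (last ys) (hd ys)"
    proof (rule zigzag_cost_snoc_le[OF p])
      show "sorted (sort ys @ [m])" using ys_le_m by (simp add: sorted_append)
      obtain a ys' where "ys = a # ys'" "ys' \<noteq> []" using ys(1) by (cases ys) (auto simp: Suc_le_eq)
      moreover obtain ys'' b where "ys' = ys'' @ [b]" using \<open>ys' \<noteq> []\<close> by (cases ys' rule: rev_cases) auto
      ultimately show "{#hd ys, last ys#} \<subseteq># mset (sort ys)" by simp
    qed (use ys in simp)
    then show ?thesis
      using less.hyps[OF ys(2,1)] rot sort_xs tour_cost_snoc[OF ys(3), of p m] by simp
  qed
qed

lemma zigzag_tour_exists:
  "sorted z \<Longrightarrow> length z \<ge> 2 \<Longrightarrow> \<exists>L. mset L = mset z \<and> L \<noteq> []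
     \<and> hd L = z!(length z - 1) \<and> last L = z!(length z - 2) \<and> tour_cost p L = zigzag_cost p z"
proof (induction z rule: rev_induct)
  case (snoc m z)
  show ?case
  proof (cases "length z = 1")
    case True
    then obtain a where "z = [a]" by (auto simp: length_Suc_conv)
    then show ?thesis
      by (intro exI[of _ "[m, a]"]) (auto simp: tour_cost_two zigzag_cost_two edge_cost_sym)
  next
    case False
    then have z: "length z \<ge> 2" using snoc.prems by simp
    with snoc obtain L where L: "mset L = mset z" "L \<noteq> []" "hd L = z!(length z - 1)"
      "last L = z!(length z - 2)" "tour_cost p L = zigzag_cost p z"
      by (auto simp: sorted_append)
    have "tour_cost p (rev (L @ [m])) = tour_cost p (L @ [m])" by (rule tour_cost_rev)
    also have "\<dots> = zigzag_cost p (z @ [m])"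
      using tour_cost_snoc[OF L(2), of p m] zigzag_cost_snoc[OF z, of p m] L
      by (simp add: edge_cost_sym)
    finally have "tour_cost p (rev (L @ [m])) = zigzag_cost p (z @ [m])" .
    with L z show ?thesis
      by (intro exI[of _ "rev (L @ [m])"]) (auto simp: hd_rev last_rev nth_append)
  qed
qed simp

lemma cycle_cost_eq_tour_cost:
  assumes "N \<ge> 1"
  shows "cycle_cost p N x \<sigma> = tour_cost p (map (\<lambda>i. x (\<sigma> i)) [0..<N])"
proof -
  let ?xs = "map (\<lambda>i. x (\<sigma> i)) [0..<N]"
  have "tour_cost p ?xs = (\<Sum>i<N. edge_cost p (?xs!i) (?xs!((i + 1) mod N)))"
    using assms by (simp add: tour_cost_eq_sum)
  also have "\<dots> = cycle_cost p N x \<sigma>"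
    unfolding cycle_cost_def edge_cost_def using assms by (intro sum.cong) auto
  finally show ?thesis by simp
qed

lemma min_cycle_cost_eq_zigzag_cost:
  assumes p: "p \<ge> 1" and N: "N \<ge> 2"
  shows "min_cycle_cost p N x = zigzag_cost p (sort (map x [0..<N]))"
proof -
  let ?xs = "map x [0..<N]"
  let ?S = "{cycle_cost p N x \<sigma> | \<sigma>. \<sigma> permutes {..<N}}"
  have tour: "cycle_cost p N x \<sigma> = tour_cost p (permute_list \<sigma> ?xs)" if "\<sigma> permutes {..<N}" for \<sigma>
  proof -
    have "map (\<lambda>i. x (\<sigma> i)) [0..<N] = permute_list \<sigma> ?xs"
    proof (rule nth_equalityI)
      fix i assume "i < length (map (\<lambda>i. x (\<sigma> i)) [0..<N])"
      then have "i < N" "\<sigma> i < N" using permutes_in_image[OF that] by auto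
      then show "map (\<lambda>i. x (\<sigma> i)) [0..<N] ! i = permute_list \<sigma> ?xs ! i"
        using that by (simp add: permute_list_nth)
    qed simp
    then show ?thesis using N by (simp add: cycle_cost_eq_tour_cost)
  qed
  have "?S = (\<lambda>\<sigma>. cycle_cost p N x \<sigma>) ` {\<sigma>. \<sigma> permutes {..<N}}" by auto
  then have fin: "finite ?S" using finite_permutations[of "{..<N}"] by simp
  have lower: "zigzag_cost p (sort ?xs) \<le> s" if s: "s \<in> ?S" for s
  proof -
    obtain \<sigma> where \<sigma>: "\<sigma> permutes {..<N}" "s = cycle_cost p N x \<sigma>" using s by auto
    have "sort (permute_list \<sigma> ?xs) = sort ?xs"
      by (rule properties_for_sort) (simp_all add: mset_permute_list \<sigma>)
    then show ?thesis
      using zigzag_cost_sort_le_tour_cost[OF p, of "permute_list \<sigma> ?xs"] N \<sigma> tour by simp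
  qed
  have attained: "zigzag_cost p (sort ?xs) \<in> ?S"
  proof -
    obtain L where L: "mset L = mset (sort ?xs)" "tour_cost p L = zigzag_cost p (sort ?xs)"
      using zigzag_tour_exists[of "sort ?xs" p] N by auto
    obtain \<sigma> where \<sigma>: "\<sigma> permutes {..<length ?xs}" "permute_list \<sigma> ?xs = L"
      using mset_eq_permutation[of L ?xs] L by auto
    then have "\<sigma> permutes {..<N}" "cycle_cost p N x \<sigma> = zigzag_cost p (sort ?xs)"
      using L tour by auto
    then show ?thesis by (metis (mono_tags, lifting) mem_Collect_eq)
  qed
  show ?thesis unfolding min_cycle_cost_def by (rule Min_eqI[OF fin lower attained])
qed

section \<open>The zigzag cost as a sum over pairs of points\<close>

definition zigzag_weight :: "nat \<Rightarrow> nat \<Rightarrow> nat \<Rightarrow> real" where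
  "zigzag_weight N i j = (if i < j then of_bool (j = i + 2) + of_bool (i = 0 \<and> j = 1)
     + of_bool (i = N - 2 \<and> j = N - 1) else 0)"

lemma zigzag_cost_eq_weighted_sum:
  assumes "length z = N" "N \<ge> 3"
  shows "zigzag_cost p z = (\<Sum>i<N. \<Sum>j<N. zigzag_weight N i j * edge_cost p (z!i) (z!j))"
proof -
  let ?e = "\<lambda>i j. edge_cost p (z!i) (z!j)"
  have weight_split: "zigzag_weight N i j * ?e i j = (if j = i + 2 then ?e i j else 0)
      + (if i = 0 \<and> j = 1 then ?e i j else 0) + (if i = N - 2 \<and> j = N - 1 then ?e i j else 0)" for i j
    using assms by (auto simp: zigzag_weight_def algebra_simps)
  have "(\<Sum>i<N. \<Sum>j<N. if j = i + 2 then ?e i j else 0) = (\<Sum>i<N. if i + 2 < N then ?e i (i + 2) else 0)"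
    by (intro sum.cong refl) (simp add: sum.delta)
  also have "\<dots> = (\<Sum>i\<in>{..<N} \<inter> {i. i + 2 < N}. ?e i (i + 2))"
    by (subst sum.inter_restrict) auto
  also have "{..<N} \<inter> {i. i + 2 < N} = {..<N - 2}" by auto
  finally have s1: "(\<Sum>i<N. \<Sum>j<N. if j = i + 2 then ?e i j else 0) = (\<Sum>i<N - 2. ?e i (i + 2))" .
  have pick: "(\<Sum>i<N. \<Sum>j<N. if i = k \<and> j = l then ?e i j else 0) = ?e k l"
    if "k < N" "l < N" for k l
  proof -
    have "(\<Sum>i<N. \<Sum>j<N. if i = k \<and> j = l then ?e i j else 0) = (\<Sum>i<N. if i = k then ?e i l else 0)"
      using that by (intro sum.cong refl) (auto simp: sum.delta)
    then show ?thesis using that by (simp add: sum.delta)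
  qed
  have s2: "(\<Sum>i<N. \<Sum>j<N. if i = 0 \<and> j = 1 then ?e i j else 0) = ?e 0 1"
    using assms by (intro pick) auto
  have s3: "(\<Sum>i<N. \<Sum>j<N. if i = N - 2 \<and> j = N - 1 then ?e i j else 0) = ?e (N - 1) (N - 2)"
    using assms pick[of "N - 2" "N - 1"] by (simp add: edge_cost_sym)
  show ?thesis
    unfolding weight_split sum.distrib s1 s2 s3 using assms by (simp add: zigzag_cost_def)
qed

definition rank :: "nat \<Rightarrow> (nat \<Rightarrow> real) \<Rightarrow> nat \<Rightarrow> nat" where
  "rank N x a = card {c \<in> {..<N}. x c < x a}"

lemma rank_sorting_permutation:
  assumes inj: "inj_on x {..<N}" and \<pi>: "\<pi> permutes {..<N}"
    and sorted: "sorted (map (\<lambda>i. x (\<pi> i)) [0..<N])" and i: "i < N"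
  shows "rank N x (\<pi> i) = i"
proof -
  have less_iff: "x (\<pi> j) < x (\<pi> i) \<longleftrightarrow> j < i" if j: "j < N" for j
  proof
    assume "x (\<pi> j) < x (\<pi> i)"
    then show "j < i" using sorted j i by (auto simp: sorted_iff_nth_mono not_less[symmetric])
  next
    assume "j < i"
    then have "x (\<pi> j) \<le> x (\<pi> i)" using sorted j i by (auto simp: sorted_iff_nth_mono)
    moreover have "\<pi> j \<noteq> \<pi> i" using \<open>j < i\<close> permutes_inj[OF \<pi>] by (metis less_irrefl inj_eq)
    then have "x (\<pi> j) \<noteq> x (\<pi> i)"
      using j i permutes_in_image[OF \<pi>] inj by (metis inj_on_eq_iff lessThan_iff)
    ultimately show "x (\<pi> j) < x (\<pi> i)" by simp
  qed
  have "{c \<in> {..<N}. x c < x (\<pi> i)} = \<pi> ` {..<i}"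
  proof (intro equalityI subsetI)
    fix c assume c: "c \<in> {c \<in> {..<N}. x c < x (\<pi> i)}"
    then have "c \<in> \<pi> ` {..<N}" using permutes_image[OF \<pi>] by simp
    then obtain j where "j < N" "c = \<pi> j" by auto
    then show "c \<in> \<pi> ` {..<i}" using less_iff c by auto
  next
    fix c assume "c \<in> \<pi> ` {..<i}"
    then obtain j where "j < i" "c = \<pi> j" by auto
    then show "c \<in> {c \<in> {..<N}. x c < x (\<pi> i)}"
      using less_iff[of j] i permutes_in_image[OF \<pi>, of j] by auto
  qed
  moreover have "inj_on \<pi> {..<i}" using permutes_inj[OF \<pi>] by (rule inj_on_subset) simp
  ultimately show ?thesis unfolding rank_def by (simp add: card_image)
qed

lemma rank_strict_mono:
  assumes "a < N" "x a < x b"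
  shows "rank N x a < rank N x b"
  unfolding rank_def using assms by (intro psubset_card_mono) auto

lemma rank_less:
  assumes "a < N" shows "rank N x a < N"
proof -
  have "rank N x a \<le> card ({..<N} - {a})" unfolding rank_def by (intro card_mono) auto
  then show ?thesis using assms by simp
qed

lemma rank_pair_counts:
  assumes inj: "inj_on x {..<N}" and a: "a < N" and b: "b < N" and ab: "x a < x b"
  defines "J \<equiv> {..<N} - {a, b}"
  shows "rank N x b = rank N x a + 1 + card {c \<in> J. x c \<in> {x a<..<x b}}"
    and "rank N x b = 1 + card {c \<in> J. x c \<in> {..<x b}}"
    and "N = rank N x a + 2 + card {c \<in> J. x c \<in> {x a<..}}"
proof -
  have fin: "finite J" by (simp add: J_def)
  have trich: "x c < x a \<or> c = a \<or> x a < x c" if "c < N" for c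
    using inj a that by (metis inj_on_eq_iff lessThan_iff linorder_neqE_linordered_idom)
  have below_b: "{c \<in> {..<N}. x c < x b}
      = {c \<in> {..<N}. x c < x a} \<union> ({a} \<union> {c \<in> J. x c \<in> {x a<..<x b}})"
    using ab a trich by (auto simp: J_def)
  show "rank N x b = rank N x a + 1 + card {c \<in> J. x c \<in> {x a<..<x b}}"
    unfolding rank_def below_b by (subst card_Un_disjoint) (auto simp: J_def)
  have "{c \<in> {..<N}. x c < x b} = insert a {c \<in> J. x c \<in> {..<x b}}"
    using ab a by (auto simp: J_def)
  then show "rank N x b = 1 + card {c \<in> J. x c \<in> {..<x b}}"
    unfolding rank_def using fin by (simp add: J_def)
  have all: "{..<N} = {c \<in> {..<N}. x c < x a} \<union> ({a} \<union> insert b {c \<in> J. x c \<in> {x a<..}})"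
    using ab a b trich by (auto simp: J_def)
  have "card {..<N} = card ({c \<in> {..<N}. x c < x a} \<union> ({a} \<union> insert b {c \<in> J. x c \<in> {x a<..}}))"
    by (rule arg_cong[where f = card, OF all])
  also have "\<dots> = rank N x a + (1 + (1 + card {c \<in> J. x c \<in> {x a<..}}))"
    unfolding rank_def using ab fin by (subst card_Un_disjoint) (auto simp: J_def card_insert_if)
  finally show "N = rank N x a + 2 + card {c \<in> J. x c \<in> {x a<..}}" by simp
qed

definition count_in :: "'a set \<Rightarrow> 'i set \<Rightarrow> ('i \<Rightarrow> 'a) \<Rightarrow> real" where
  "count_in S J w = (\<Sum>c\<in>J. indicator S (w c))"

lemma count_in_eq_card: "finite J \<Longrightarrow> count_in S J w = real (card {c \<in> J. w c \<in> S})"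
  unfolding count_in_def indicator_def by (simp add: sum.If_cases Int_def)

text \<open>The ordered pair (a, b) with x a < x b is an edge of the zigzag tour iff exactly one other
  point lies between them, or nothing lies below x b except x a, or nothing lies above x a except x b.\<close>
definition pair_contrib :: "real \<Rightarrow> nat \<Rightarrow> nat \<Rightarrow> nat \<Rightarrow> (nat \<Rightarrow> real) \<Rightarrow> real" where
  "pair_contrib p N a b x = (if x a < x b then (x b - x a) powr p else 0) *
    (of_bool (count_in {x a<..<x b} ({..<N} - {a, b}) x = 1)
     + of_bool (count_in {..<x b} ({..<N} - {a, b}) x = 0)
     + of_bool (count_in {x a<..} ({..<N} - {a, b}) x = 0))"

lemma pair_contrib_nonneg: "pair_contrib p N a b x \<ge> 0"
  unfolding pair_contrib_def by (intro mult_nonneg_nonneg add_nonneg_nonneg) auto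

lemma zigzag_weight_rank_eq_pair_contrib:
  assumes inj: "inj_on x {..<N}" and a: "a < N" and b: "b < N" and ab: "a \<noteq> b"
  shows "zigzag_weight N (rank N x a) (rank N x b) * edge_cost p (x a) (x b) = pair_contrib p N a b x"
proof (cases "x a < x b")
  case False
  then have "x b < x a" using inj a b ab by (metis inj_on_eq_iff lessThan_iff linorder_neqE_linordered_idom)
  then have "rank N x b < rank N x a" by (rule rank_strict_mono[OF b])
  with False show ?thesis unfolding zigzag_weight_def pair_contrib_def by simp
next
  case True
  define J where "J = {..<N} - {a, b}"
  have "finite J" by (simp add: J_def)
  define kA where "kA = card {c \<in> J. x c \<in> {x a<..<x b}}"
  define kB where "kB = card {c \<in> J. x c \<in> {..<x b}}"
  define kC where "kC = card {c \<in> J. x c \<in> {x a<..}}"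
  note counts = rank_pair_counts[OF inj a b True, folded J_def, folded kA_def kB_def kC_def]
  have "rank N x a < rank N x b" by (rule rank_strict_mono[OF a True])
  moreover have "rank N x b < N" by (rule rank_less[OF b])
  ultimately have "rank N x b = rank N x a + 2 \<longleftrightarrow> kA = 1"
    "rank N x a = 0 \<and> rank N x b = 1 \<longleftrightarrow> kB = 0"
    "rank N x a = N - 2 \<and> rank N x b = N - 1 \<longleftrightarrow> kC = 0"
    and "rank N x a < rank N x b"
    using counts by auto
  moreover have "count_in {x a<..<x b} J x = real kA" "count_in {..<x b} J x = real kB"
    "count_in {x a<..} J x = real kC"
    by (simp_all add: count_in_eq_card[OF \<open>finite J\<close>] kA_def kB_def kC_def)
  ultimately show ?thesis using True
    unfolding zigzag_weight_def pair_contrib_def J_def[symmetric] by (simp add: edge_cost_def mult.commute)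
qed

lemma zigzag_cost_sort_eq_pair_sum:
  assumes N: "N \<ge> 3" and inj: "inj_on x {..<N}"
  shows "zigzag_cost p (sort (map x [0..<N])) = (\<Sum>a<N. \<Sum>b\<in>{..<N} - {a}. pair_contrib p N a b x)"
proof -
  define z where "z = sort (map x [0..<N])"
  obtain \<pi> where \<pi>: "\<pi> permutes {..<length (map x [0..<N])}" "permute_list \<pi> (map x [0..<N]) = z"
    using mset_eq_permutation[of z "map x [0..<N]"] unfolding z_def by auto
  have \<pi>N: "\<pi> permutes {..<N}" using \<pi>(1) by simp
  have z_nth: "z!i = x (\<pi> i)" if "i < N" for i
  proof -
    have "z!i = map x [0..<N] ! \<pi> i" using \<pi> that by (metis length_map length_upt minus_nat.diff_0 permute_list_nth)
    also have "\<dots> = x (\<pi> i)" using permutes_in_image[OF \<pi>N] that by simp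
    finally show ?thesis .
  qed
  have "length z = N" unfolding z_def by simp
  then have "map (\<lambda>i. x (\<pi> i)) [0..<N] = z" using z_nth by (intro nth_equalityI) auto
  then have rank_\<pi>: "rank N x (\<pi> i) = i" if "i < N" for i
    using rank_sorting_permutation[OF inj \<pi>N _ that] unfolding z_def by simp
  have bij: "bij_betw \<pi> {..<N} {..<N}" by (rule permutes_imp_bij[OF \<pi>N])
  let ?f = "\<lambda>a b. zigzag_weight N (rank N x a) (rank N x b) * edge_cost p (x a) (x b)"
  have "zigzag_cost p z = (\<Sum>i<N. \<Sum>j<N. ?f (\<pi> i) (\<pi> j))"
    unfolding zigzag_cost_eq_weighted_sum[OF \<open>length z = N\<close> N]
    by (intro sum.cong refl) (simp add: z_nth rank_\<pi>)
  also have "\<dots> = (\<Sum>i<N. \<Sum>b<N. ?f (\<pi> i) b)"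
    by (intro sum.cong refl sum.reindex_bij_betw[OF bij])
  also have "\<dots> = (\<Sum>a<N. \<Sum>b<N. ?f a b)"
    by (rule sum.reindex_bij_betw[OF bij])
  also have "\<dots> = (\<Sum>a<N. \<Sum>b\<in>{..<N} - {a}. pair_contrib p N a b x)"
  proof (rule sum.cong[OF refl])
    fix a assume a: "a \<in> {..<N}"
    have "(\<Sum>b<N. ?f a b) = ?f a a + (\<Sum>b\<in>{..<N} - {a}. ?f a b)"
      using a by (subst sum.remove[of _ a]) auto
    also have "\<dots> = (\<Sum>b\<in>{..<N} - {a}. pair_contrib p N a b x)"
    proof -
      have "zigzag_weight N (rank N x a) (rank N x a) = 0" by (simp add: zigzag_weight_def)
      moreover have "(\<Sum>b\<in>{..<N} - {a}. ?f a b) = (\<Sum>b\<in>{..<N} - {a}. pair_contrib p N a b x)"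
        using a by (intro sum.cong refl zigzag_weight_rank_eq_pair_contrib[OF inj]) auto
      ultimately show ?thesis by simp
    qed
    finally show "(\<Sum>b<N. ?f a b) = (\<Sum>b\<in>{..<N} - {a}. pair_contrib p N a b x)" .
  qed
  finally show ?thesis unfolding z_def .
qed

section \<open>Counting sample points in a set\<close>

lemma count_in_measurable [measurable]:
  assumes "S \<in> sets M"
  shows "count_in S J \<in> borel_measurable (PiM J (\<lambda>_. M))"
  unfolding count_in_def
proof (rule borel_measurable_sum)
  fix c assume "c \<in> J"
  from measurable_compose[OF measurable_component_singleton[OF this] borel_measurable_indicator[OF assms]]
  show "(\<lambda>w. indicator S (w c) :: real) \<in> borel_measurable (PiM J (\<lambda>_. M))" .
qed

context prob_space
begin

lemma nn_integral_PiM_count_in_eq: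
  assumes "S \<in> events"
  shows "(\<integral>\<^sup>+ w. ennreal (of_bool (count_in S J w = k)) \<partial>PiM J (\<lambda>_. M))
    = emeasure (PiM J (\<lambda>_. M)) {w \<in> space (PiM J (\<lambda>_. M)). count_in S J w = k}"
proof -
  have "{w \<in> space (PiM J (\<lambda>_. M)). count_in S J w = k} \<in> sets (PiM J (\<lambda>_. M))"
    using assms by measurable
  moreover have "(\<integral>\<^sup>+ w. ennreal (of_bool (count_in S J w = k)) \<partial>PiM J (\<lambda>_. M))
    = (\<integral>\<^sup>+ w. indicator {w \<in> space (PiM J (\<lambda>_. M)). count_in S J w = k} w \<partial>PiM J (\<lambda>_. M))"
    by (intro nn_integral_cong) (simp add: indicator_def)
  ultimately show ?thesis by simp
qed

lemma emeasure_PiM_count_in_eq_0: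
  assumes J: "finite J" and S: "S \<in> events"
  shows "emeasure (PiM J (\<lambda>_. M)) {w \<in> space (PiM J (\<lambda>_. M)). count_in S J w = 0}
    = ennreal ((1 - prob S) ^ card J)"
proof -
  interpret product_sigma_finite "\<lambda>_::'b. M"
    by (simp add: product_sigma_finite_def sigma_finite_measure_axioms)
  have "{w \<in> space (PiM J (\<lambda>_. M)). count_in S J w = 0} = PiE J (\<lambda>_. space M - S)"
    using J by (auto simp: space_PiM count_in_eq_card[OF J] PiE_def Pi_iff)
  then show ?thesis
    using J S by (simp add: emeasure_PiM prob_compl emeasure_eq_measure ennreal_power)
qed

lemma emeasure_PiM_count_in_eq_1:
  assumes J: "finite J" and S: "S \<in> events"
  shows "emeasure (PiM J (\<lambda>_. M)) {w \<in> space (PiM J (\<lambda>_. M)). count_in S J w = 1}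
    = ennreal (card J * prob S * (1 - prob S) ^ (card J - 1))"
proof -
  interpret product_sigma_finite "\<lambda>_::'b. M"
    by (simp add: product_sigma_finite_def sigma_finite_measure_axioms)
  define A where "A c = PiE J (\<lambda>i. if i = c then S else space M - S)" for c
  have "S \<subseteq> space M" using S by (rule sets.sets_into_space)
  then have "w \<in> A c \<longleftrightarrow> w \<in> space (PiM J (\<lambda>_. M)) \<and> {i \<in> J. w i \<in> S} = {c}" if "c \<in> J" for w c
    using that by (auto simp: A_def space_PiM PiE_iff)
  then have "{w \<in> space (PiM J (\<lambda>_. M)). count_in S J w = 1} = (\<Union>c\<in>J. A c)"
    by (auto simp: count_in_eq_card[OF J] card_1_singleton_iff)
  moreover have "A ` J \<subseteq> sets (PiM J (\<lambda>_. M))"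
    using J S by (auto simp: A_def intro!: sets_PiM_I_finite)
  moreover have "emeasure (PiM J (\<lambda>_. M)) (A c) = ennreal (prob S * (1 - prob S) ^ (card J - 1))"
    if "c \<in> J" for c
  proof -
    have "emeasure (PiM J (\<lambda>_. M)) (A c) = emeasure M S * (\<Prod>i\<in>J - {c}. emeasure M (space M - S))"
      using J S that by (simp add: A_def emeasure_PiM prod.remove)
    then show ?thesis
      using J S that by (simp add: prob_compl emeasure_eq_measure ennreal_power ennreal_mult)
  qed
  moreover have "disjoint_family_on A J"
    by (auto simp: disjoint_family_on_def A_def PiE_iff) (metis DiffD2)
  ultimately show ?thesis
    using J by (simp add: sum_emeasure[symmetric] ennreal_of_nat_eq_real_of_nat ennreal_mult' mult.assoc)
qed

end

section \<open>Expected contribution of a pair of points\<close>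

abbreviation unif01 :: "real measure" where
  "unif01 \<equiv> uniform_measure lborel {0..1}"

lemma prob_space_unif01: "prob_space unif01"
  by (rule prob_space_uniform_measure) simp_all

interpretation unif01: prob_space unif01
  by (rule prob_space_unif01)

interpretation unif01_product: product_sigma_finite "\<lambda>_::nat. unif01"
  by (simp add: product_sigma_finite_def unif01.sigma_finite_measure_axioms)

lemma measure_unif01_greaterThanLessThan:
  "0 \<le> s \<Longrightarrow> s \<le> t \<Longrightarrow> t \<le> 1 \<Longrightarrow> measure unif01 {s<..<t} = t - s"
  by (simp add: Int_absorb1 subset_eq)

lemma measure_unif01_lessThan: "0 \<le> t \<Longrightarrow> t \<le> 1 \<Longrightarrow> measure unif01 {..<t} = t"
proof -
  assume "0 \<le> t" "t \<le> 1"
  then have "{0..1} \<inter> {..<t} = {0..<t}" by auto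
  then show ?thesis using \<open>0 \<le> t\<close> by simp
qed

lemma measure_unif01_greaterThan: "0 \<le> s \<Longrightarrow> s \<le> 1 \<Longrightarrow> measure unif01 {s<..} = 1 - s"
proof -
  assume "0 \<le> s" "s \<le> 1"
  then have "{0..1} \<inter> {s<..} = {s<..1}" by auto
  then show ?thesis using \<open>s \<le> 1\<close> by simp
qed

text \<open>The conditional expectation of pair_contrib given x a = s and x b = t when n further
  points are uniform: the three summands are the probabilities that exactly one of them falls
  into (s, t), that none falls below t, and that none falls above s.\<close>
definition pair_kernel :: "real \<Rightarrow> nat \<Rightarrow> real \<Rightarrow> real \<Rightarrow> real" where
  "pair_kernel p n s t = (if s < t then (t - s) powr p else 0)
     * (n * (t - s) * (1 - (t - s)) ^ (n - 1) + (1 - t) ^ n + s ^ n)"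

lemma pair_kernel_measurable [measurable]:
  "(\<lambda>(s, t). pair_kernel p n s t) \<in> borel_measurable (borel \<Otimes>\<^sub>M borel)"
  unfolding pair_kernel_def by measurable

lemma nn_integral_pair_contrib_fibre:
  assumes J: "finite J" "card J = n" and s: "0 \<le> s" "s \<le> 1" and t: "0 \<le> t" "t \<le> 1"
  shows "(\<integral>\<^sup>+ w. ennreal ((if s < t then (t - s) powr p else 0) *
      (of_bool (count_in {s<..<t} J w = 1) + of_bool (count_in {..<t} J w = 0)
       + of_bool (count_in {s<..} J w = 0))) \<partial>PiM J (\<lambda>_. unif01))
    = ennreal (pair_kernel p n s t)"
proof (cases "s < t")
  case True
  let ?P = "PiM J (\<lambda>_. unif01)"
  let ?I = "\<lambda>S k. \<integral>\<^sup>+ w. ennreal (of_bool (count_in S J w = k)) \<partial>?P"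
  have integrand: "ennreal ((t - s) powr p * (of_bool (count_in {s<..<t} J w = 1)
        + of_bool (count_in {..<t} J w = 0) + of_bool (count_in {s<..} J w = 0)))
      = ennreal ((t - s) powr p) * (ennreal (of_bool (count_in {s<..<t} J w = 1))
        + ennreal (of_bool (count_in {..<t} J w = 0)) + ennreal (of_bool (count_in {s<..} J w = 0)))" for w
    by (simp add: ennreal_mult ennreal_plus[symmetric] del: ennreal_plus)
  have "?I {s<..<t} 1 = ennreal (n * (t - s) * (1 - (t - s)) ^ (n - 1))"
    using unif01.emeasure_PiM_count_in_eq_1[OF J(1), of "{s<..<t}",
        unfolded measure_unif01_greaterThanLessThan[OF s(1) less_imp_le[OF True] t(2)]] J
    by (simp add: unif01.nn_integral_PiM_count_in_eq)
  moreover have "?I {..<t} 0 = ennreal ((1 - t) ^ n)"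
    using unif01.emeasure_PiM_count_in_eq_0[OF J(1), of "{..<t}", unfolded measure_unif01_lessThan[OF t]] J
    by (simp add: unif01.nn_integral_PiM_count_in_eq)
  moreover have "?I {s<..} 0 = ennreal (s ^ n)"
    using unif01.emeasure_PiM_count_in_eq_0[OF J(1), of "{s<..}", unfolded measure_unif01_greaterThan[OF s]] J
    by (simp add: unif01.nn_integral_PiM_count_in_eq)
  moreover have "(\<integral>\<^sup>+ w. ennreal (of_bool (count_in {s<..<t} J w = 1))
        + ennreal (of_bool (count_in {..<t} J w = 0)) + ennreal (of_bool (count_in {s<..} J w = 0)) \<partial>?P)
      = ?I {s<..<t} 1 + ?I {..<t} 0 + ?I {s<..} 0"
    by (simp add: nn_integral_add)
  moreover have "ennreal (pair_kernel p n s t) = ennreal ((t - s) powr p) * (ennreal (n * (t - s) * (1 - (t - s)) ^ (n - 1))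
      + ennreal ((1 - t) ^ n) + ennreal (s ^ n))"
    using True s t by (simp add: pair_kernel_def ennreal_mult)
  ultimately show ?thesis
    unfolding if_P[OF True] integrand by (subst nn_integral_cmult) simp_all
qed (simp add: pair_kernel_def)

lemma pair_contrib_measurable [measurable]:
  assumes "a < N" "b < N"
  shows "(\<lambda>x. pair_contrib p N a b x) \<in> borel_measurable (PiM {..<N} (\<lambda>_. unif01))"
proof -
  let ?P = "PiM {..<N} (\<lambda>_. unif01)" and ?J = "{..<N} - {a, b}"
  have [measurable]: "a \<in> {..<N}" "b \<in> {..<N}" using assms by auto
  have count: "count_in S J x = (\<Sum>c\<in>J. if x c \<in> S then 1 else 0)" for S J x
    unfolding count_in_def by (intro sum.cong) (auto simp: indicator_def)
  have "(\<lambda>x. if x c \<in> {x a<..<x b} then 1 else 0 :: real) \<in> borel_measurable ?P"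
    "(\<lambda>x. if x c \<in> {..<x b} then 1 else 0 :: real) \<in> borel_measurable ?P"
    "(\<lambda>x. if x c \<in> {x a<..} then 1 else 0 :: real) \<in> borel_measurable ?P" if "c \<in> ?J" for c
    using that by (measurable; auto)+
  then have [measurable]: "(\<lambda>x. \<Sum>c\<in>?J. if x c \<in> {x a<..<x b} then 1 else 0 :: real) \<in> borel_measurable ?P"
    "(\<lambda>x. \<Sum>c\<in>?J. if x c \<in> {..<x b} then 1 else 0 :: real) \<in> borel_measurable ?P"
    "(\<lambda>x. \<Sum>c\<in>?J. if x c \<in> {x a<..} then 1 else 0 :: real) \<in> borel_measurable ?P"
    by (auto intro!: borel_measurable_sum)
  show ?thesis unfolding pair_contrib_def count by measurable
qed

lemma nn_integral_pair_contrib: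
  assumes a: "a < N" and b: "b < N" and ab: "a \<noteq> b"
  shows "(\<integral>\<^sup>+ x. ennreal (pair_contrib p N a b x) \<partial>PiM {..<N} (\<lambda>_. unif01))
     = (\<integral>\<^sup>+ s. \<integral>\<^sup>+ t. ennreal (pair_kernel p (N - 2) s t) \<partial>unif01 \<partial>unif01)"
proof -
  define J where "J = {..<N} - {a, b}"
  have N_split: "{..<N} = {a, b} \<union> J" and disj: "{a, b} \<inter> J = {}" and "finite J"
    using a b by (auto simp: J_def)
  have card_J: "card J = N - 2" using a b ab by (simp add: J_def card_Diff_subset)
  have "(\<integral>\<^sup>+ x. ennreal (pair_contrib p N a b x) \<partial>PiM ({a, b} \<union> J) (\<lambda>_. unif01))
      = (\<integral>\<^sup>+ y. \<integral>\<^sup>+ w. ennreal (pair_contrib p N a b (merge {a, b} J (y, w)))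
          \<partial>PiM J (\<lambda>_. unif01) \<partial>PiM {a, b} (\<lambda>_. unif01))"
    using pair_contrib_measurable[OF a b, of p] N_split
    by (intro unif01_product.product_nn_integral_fold[OF disj _ \<open>finite J\<close>]) simp_all
  also have "\<dots> = (\<integral>\<^sup>+ y. ennreal (pair_kernel p (N - 2) (y a) (y b)) \<partial>PiM {a, b} (\<lambda>_. unif01))"
  proof (rule nn_integral_cong_AE)
    have "AE y in PiM {a, b} (\<lambda>_. unif01). y a \<in> {0..1}" "AE y in PiM {a, b} (\<lambda>_. unif01). y b \<in> {0..1}"
      by (auto intro!: AE_PiM_component AE_uniform_measureI simp: prob_space_unif01)
    then show "AE y in PiM {a, b} (\<lambda>_. unif01).
        (\<integral>\<^sup>+ w. ennreal (pair_contrib p N a b (merge {a, b} J (y, w))) \<partial>PiM J (\<lambda>_. unif01))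
        = ennreal (pair_kernel p (N - 2) (y a) (y b))"
    proof eventually_elim
      case (elim y)
      have merge: "merge {a, b} J (y, w) a = y a" "merge {a, b} J (y, w) b = y b"
        "count_in S J (merge {a, b} J (y, w)) = count_in S J w" for S w
        using disj unfolding count_in_def by (auto intro!: sum.cong)
      show ?case
        unfolding pair_contrib_def J_def[symmetric] merge
        using nn_integral_pair_contrib_fibre[OF \<open>finite J\<close> card_J, of "y a" "y b" p] elim by simp
    qed
  qed
  also have "\<dots> = (\<integral>\<^sup>+ z. ennreal (pair_kernel p (N - 2) (fst z) (snd z)) \<partial>(unif01 \<Otimes>\<^sub>M unif01))"
    using ab by (intro unif01_product.product_nn_integral_pair) measurable
  also have "\<dots> = (\<integral>\<^sup>+ s. \<integral>\<^sup>+ t. ennreal (pair_kernel p (N - 2) s t) \<partial>unif01 \<partial>unif01)"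
    using unif01.nn_integral_fst[of "\<lambda>z. ennreal (pair_kernel p (N - 2) (fst z) (snd z))" unif01] by simp
  finally show ?thesis using N_split by simp
qed

section \<open>Beta integrals over the simplex\<close>

lemma nn_integral_Beta:
  fixes a b :: real
  assumes "a > 0" "b > 0"
  shows "(\<integral>\<^sup>+ x. ennreal (if 0 \<le> x \<and> x \<le> 1 then x powr (a - 1) * (1 - x) powr (b - 1) else 0) \<partial>lborel)
    = ennreal (Beta a b)"
proof -
  have "(\<integral>\<^sup>+ x. ennreal (indicator {0..1} x * (x powr (a - 1) * (1 - x) powr (b - 1))) \<partial>lborel)
      = ennreal (Beta a b)"
    by (rule nn_integral_has_integral_lebesgue) (use has_integral_Beta_real[OF assms] in auto)
  moreover have "(\<integral>\<^sup>+ x. ennreal (if 0 \<le> x \<and> x \<le> 1 then x powr (a - 1) * (1 - x) powr (b - 1) else 0) \<partial>lborel)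
      = (\<integral>\<^sup>+ x. ennreal (indicator {0..1} x * (x powr (a - 1) * (1 - x) powr (b - 1))) \<partial>lborel)"
    by (intro nn_integral_cong) (simp add: indicator_def)
  ultimately show ?thesis by simp
qed

lemma nn_integral_powr:
  fixes a c :: real
  assumes "a > -1" "c \<ge> 0"
  shows "(\<integral>\<^sup>+ x. ennreal (if 0 \<le> x \<and> x \<le> c then x powr a else 0) \<partial>lborel) = ennreal (c powr (a + 1) / (a + 1))"
proof -
  have "(\<integral>\<^sup>+ x. ennreal (indicator {0..c} x * x powr a) \<partial>lborel) = ennreal (c powr (a + 1) / (a + 1))"
    by (rule nn_integral_has_integral_lebesgue) (use has_integral_powr_from_0[OF assms] in auto)
  moreover have "(\<integral>\<^sup>+ x. ennreal (if 0 \<le> x \<and> x \<le> c then x powr a else 0) \<partial>lborel)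
      = (\<integral>\<^sup>+ x. ennreal (indicator {0..c} x * x powr a) \<partial>lborel)"
    by (intro nn_integral_cong) (simp add: indicator_def)
  ultimately show ?thesis by simp
qed

lemma nn_integral_lborel_translate:
  fixes f :: "real \<Rightarrow> ennreal"
  shows "f \<in> borel_measurable borel \<Longrightarrow> (\<integral>\<^sup>+ x. f x \<partial>lborel) = (\<integral>\<^sup>+ x. f (c + x) \<partial>lborel)"
  using nn_integral_real_affine[of f 1 c] by simp

lemma nn_integral_lborel_reflect:
  fixes f :: "real \<Rightarrow> ennreal"
  shows "f \<in> borel_measurable borel \<Longrightarrow> (\<integral>\<^sup>+ x. f x \<partial>lborel) = (\<integral>\<^sup>+ x. f (c - x) \<partial>lborel)"
  using nn_integral_real_affine[of f "-1" c] by simp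

lemma nn_integral_simplex_gap:
  fixes p :: real and n :: nat
  assumes p: "p > -1" and n: "n \<ge> 1"
  shows "(\<integral>\<^sup>+ s. \<integral>\<^sup>+ t. ennreal (if 0 \<le> s \<and> s < t \<and> t \<le> 1
      then (t - s) powr (p + 1) * (1 - (t - s)) ^ (n - 1) else 0) \<partial>lborel \<partial>lborel)
    = ennreal (Beta (p + 2) (real n + 1))"
proof -
  define G where "G s d = ennreal (if 0 \<le> s \<and> 0 < d \<and> s + d \<le> 1
    then d powr (p + 1) * (1 - d) ^ (n - 1) else 0)" for s d :: real
  have [measurable]: "case_prod G \<in> borel_measurable (lborel \<Otimes>\<^sub>M lborel)"
    unfolding G_def by measurable
  have translate: "(\<integral>\<^sup>+ t. ennreal (if 0 \<le> s \<and> s < t \<and> t \<le> 1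
      then (t - s) powr (p + 1) * (1 - (t - s)) ^ (n - 1) else 0) \<partial>lborel) = (\<integral>\<^sup>+ d. G s d \<partial>lborel)" for s
    by (subst nn_integral_lborel_translate[where c = s]) (auto simp: G_def intro!: nn_integral_cong)
  have inner: "(\<integral>\<^sup>+ s. G s d \<partial>lborel)
      = ennreal (if 0 \<le> d \<and> d \<le> 1 then d powr (p + 2 - 1) * (1 - d) powr (real n + 1 - 1) else 0)" for d
  proof (cases "0 < d \<and> d \<le> 1")
    case True
    have "(\<integral>\<^sup>+ s. G s d \<partial>lborel)
        = (\<integral>\<^sup>+ s. ennreal (d powr (p + 1) * (1 - d) ^ (n - 1)) * indicator {0..1 - d} s \<partial>lborel)"
      using True by (intro nn_integral_cong) (auto simp: G_def indicator_def)
    also have "\<dots> = ennreal (d powr (p + 1) * ((1 - d) ^ (n - 1) * (1 - d)))"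
      using True by (subst nn_integral_cmult_indicator) (auto simp: ennreal_mult mult.assoc)
    also have "(1 - d) ^ (n - 1) * (1 - d) = (1 - d) powr (real n + 1 - 1)"
      using True n by (cases "d = 1") (simp_all add: powr_realpow power_eq_if[of "1 - d" n])
    finally show ?thesis using True by (simp add: add.commute)
  next
    case False
    then have "G s d = 0" for s by (auto simp: G_def)
    then show ?thesis using False by (cases "d = 0") auto
  qed
  have "(\<integral>\<^sup>+ s. \<integral>\<^sup>+ d. G s d \<partial>lborel \<partial>lborel) = (\<integral>\<^sup>+ d. \<integral>\<^sup>+ s. G s d \<partial>lborel \<partial>lborel)"
    by (rule lborel_pair.Fubini'[symmetric]) measurable
  then show ?thesis
    using nn_integral_Beta[of "p + 2" "real n + 1"] p by (simp add: translate inner)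
qed

lemma nn_integral_simplex_top:
  fixes p :: real and n :: nat
  assumes p: "p > -1" and n: "n \<ge> 1"
  shows "(\<integral>\<^sup>+ s. \<integral>\<^sup>+ t. ennreal (if 0 \<le> s \<and> s < t \<and> t \<le> 1 then (t - s) powr p * (1 - t) ^ n else 0)
      \<partial>lborel \<partial>lborel)
    = ennreal (Beta (p + 2) (real n + 1) / (p + 1))"
proof -
  define F where "F s t = ennreal (if 0 \<le> s \<and> s < t \<and> t \<le> 1 then (t - s) powr p * (1 - t) ^ n else 0)"
    for s t :: real
  have [measurable]: "case_prod F \<in> borel_measurable (lborel \<Otimes>\<^sub>M lborel)"
    unfolding F_def by measurable
  have inner: "(\<integral>\<^sup>+ s. F s t \<partial>lborel)
      = ennreal (if 0 \<le> t \<and> t \<le> 1 then t powr (p + 2 - 1) * (1 - t) powr (real n + 1 - 1) else 0)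
        * ennreal (1 / (p + 1))" for t
  proof (cases "0 \<le> t \<and> t \<le> 1")
    case True
    have "(\<integral>\<^sup>+ s. F s t \<partial>lborel) = (\<integral>\<^sup>+ u. F (t - u) t \<partial>lborel)"
      by (rule nn_integral_lborel_reflect) (simp add: F_def)
    also have "\<dots> = (\<integral>\<^sup>+ u. ennreal ((1 - t) ^ n) * ennreal (if 0 \<le> u \<and> u \<le> t then u powr p else 0) \<partial>lborel)"
      using True by (intro nn_integral_cong) (auto simp: F_def ennreal_mult[symmetric] mult.commute)
    also have "\<dots> = ennreal ((1 - t) ^ n) * ennreal (t powr (p + 1) / (p + 1))"
      using nn_integral_powr[of p t] p True by (subst nn_integral_cmult) auto
    also have "\<dots> = ennreal (t powr (p + 2 - 1) * (1 - t) powr (real n + 1 - 1)) * ennreal (1 / (p + 1))"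
      using True n p by (cases "t = 1") (simp_all add: powr_realpow ennreal_mult[symmetric] add.commute)
    finally show ?thesis using True by simp
  next
    case False
    then have "F s t = 0" for s by (auto simp: F_def)
    then show ?thesis using False by (simp only: if_False) simp
  qed
  have "(\<integral>\<^sup>+ s. \<integral>\<^sup>+ t. F s t \<partial>lborel \<partial>lborel) = (\<integral>\<^sup>+ t. \<integral>\<^sup>+ s. F s t \<partial>lborel \<partial>lborel)"
    by (rule lborel_pair.Fubini'[symmetric]) measurable
  also have "\<dots> = ennreal (Beta (p + 2) (real n + 1)) * ennreal (1 / (p + 1))"
    unfolding inner using nn_integral_Beta[of "p + 2" "real n + 1"] p
    by (subst nn_integral_multc) auto
  finally show ?thesis using p by (simp add: F_def ennreal_mult[symmetric] Beta_def)
qed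

lemma nn_integral_simplex_bottom:
  fixes p :: real and n :: nat
  assumes p: "p > -1" and n: "n \<ge> 1"
  shows "(\<integral>\<^sup>+ s. \<integral>\<^sup>+ t. ennreal (if 0 \<le> s \<and> s < t \<and> t \<le> 1 then (t - s) powr p * s ^ n else 0)
      \<partial>lborel \<partial>lborel)
    = ennreal (Beta (p + 2) (real n + 1) / (p + 1))"
proof -
  define F where "F s t = ennreal (if 0 \<le> s \<and> s < t \<and> t \<le> 1 then (t - s) powr p * (1 - t) ^ n else 0)"
    for s t :: real
  define C where "C s t = ennreal (if 0 \<le> s \<and> s < t \<and> t \<le> 1 then (t - s) powr p * s ^ n else 0)"
    for s t :: real
  have [measurable]: "case_prod F \<in> borel_measurable (lborel \<Otimes>\<^sub>M lborel)"
    "case_prod C \<in> borel_measurable (lborel \<Otimes>\<^sub>M lborel)"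
    unfolding F_def C_def by measurable
  have "(\<integral>\<^sup>+ s. \<integral>\<^sup>+ t. C s t \<partial>lborel \<partial>lborel) = (\<integral>\<^sup>+ s. \<integral>\<^sup>+ t. C (1 - s) t \<partial>lborel \<partial>lborel)"
    by (rule nn_integral_lborel_reflect) (rule lborel.borel_measurable_nn_integral, measurable)
  also have "\<dots> = (\<integral>\<^sup>+ s. \<integral>\<^sup>+ t. C (1 - s) (1 - t) \<partial>lborel \<partial>lborel)"
    by (intro nn_integral_cong nn_integral_lborel_reflect) measurable
  also have "\<dots> = (\<integral>\<^sup>+ s. \<integral>\<^sup>+ t. F t s \<partial>lborel \<partial>lborel)"
    by (intro nn_integral_cong) (auto simp: C_def F_def)
  also have "\<dots> = (\<integral>\<^sup>+ t. \<integral>\<^sup>+ s. F t s \<partial>lborel \<partial>lborel)"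
    by (rule lborel_pair.Fubini') measurable
  finally show ?thesis using nn_integral_simplex_top[OF p n] by (simp add: C_def F_def)
qed

lemma nn_integral_unif01:
  "f \<in> borel_measurable borel \<Longrightarrow> (\<integral>\<^sup>+ x. f x \<partial>unif01) = (\<integral>\<^sup>+ x. f x * indicator {0..1} x \<partial>lborel)"
  by (subst nn_integral_uniform_measure) (simp_all add: divide_ennreal_def)

lemma Beta_real_pos: "a > 0 \<Longrightarrow> b > 0 \<Longrightarrow> Beta a b > (0::real)"
  by (simp add: Beta_def)

lemma nn_integral_pair_kernel:
  fixes p :: real and n :: nat
  assumes p: "p > -1" and n: "n \<ge> 1"
  shows "(\<integral>\<^sup>+ s. \<integral>\<^sup>+ t. ennreal (pair_kernel p n s t) \<partial>unif01 \<partial>unif01)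
    = ennreal (n * Beta (p + 2) (real n + 1) + 2 * (Beta (p + 2) (real n + 1) / (p + 1)))"
proof -
  define A where "A s t = ennreal (if 0 \<le> s \<and> s < t \<and> t \<le> 1
    then (t - s) powr (p + 1) * (1 - (t - s)) ^ (n - 1) else 0)" for s t :: real
  define B where "B s t = ennreal (if 0 \<le> s \<and> s < t \<and> t \<le> 1 then (t - s) powr p * (1 - t) ^ n else 0)"
    for s t :: real
  define C where "C s t = ennreal (if 0 \<le> s \<and> s < t \<and> t \<le> 1 then (t - s) powr p * s ^ n else 0)"
    for s t :: real
  have [measurable]: "case_prod A \<in> borel_measurable (lborel \<Otimes>\<^sub>M lborel)"
    "case_prod B \<in> borel_measurable (lborel \<Otimes>\<^sub>M lborel)"
    "case_prod C \<in> borel_measurable (lborel \<Otimes>\<^sub>M lborel)"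
    unfolding A_def B_def C_def by measurable
  have kernel_split: "ennreal (pair_kernel p n s t) * indicator {0..1} t * indicator {0..1} s
      = ennreal n * A s t + B s t + C s t" for s t
  proof (cases "0 \<le> s \<and> s < t \<and> t \<le> 1")
    case True
    then have "pair_kernel p n s t = n * ((t - s) powr (p + 1) * (1 - (t - s)) ^ (n - 1))
        + (t - s) powr p * (1 - t) ^ n + (t - s) powr p * s ^ n"
      by (simp add: pair_kernel_def powr_add algebra_simps)
    moreover have "0 \<le> (t - s) powr (p + 1) * (1 - (t - s)) ^ (n - 1)" "0 \<le> (t - s) powr p * (1 - t) ^ n"
      "0 \<le> (t - s) powr p * s ^ n"
      using True by simp_all
    ultimately have "ennreal (pair_kernel p n s t) = ennreal n * ennreal ((t - s) powr (p + 1) * (1 - (t - s)) ^ (n - 1))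
        + ennreal ((t - s) powr p * (1 - t) ^ n) + ennreal ((t - s) powr p * s ^ n)"
      by (simp only: ennreal_plus[symmetric] ennreal_mult[symmetric] of_nat_0_le_iff add_nonneg_nonneg mult_nonneg_nonneg)
    with True show ?thesis by (simp add: A_def B_def C_def)
  qed (auto simp: A_def B_def C_def pair_kernel_def indicator_def)
  have "(\<integral>\<^sup>+ s. \<integral>\<^sup>+ t. ennreal (pair_kernel p n s t) \<partial>unif01 \<partial>unif01)
      = (\<integral>\<^sup>+ s. \<integral>\<^sup>+ t. ennreal (pair_kernel p n s t) * indicator {0..1} t * indicator {0..1} s \<partial>lborel \<partial>lborel)"
    by (subst nn_integral_unif01; measurable?; simp add: nn_integral_unif01 nn_integral_multc)
  also have "\<dots> = (\<integral>\<^sup>+ z. ennreal n * case_prod A z + case_prod B z + case_prod C z \<partial>(lborel \<Otimes>\<^sub>M lborel))"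
  proof -
    have "(\<lambda>z. ennreal n * case_prod A z + case_prod B z + case_prod C z) \<in> borel_measurable (lborel \<Otimes>\<^sub>M lborel)"
      by measurable
    from lborel.nn_integral_fst[OF this] show ?thesis unfolding kernel_split by simp
  qed
  also have "\<dots> = ennreal n * (\<integral>\<^sup>+ s. \<integral>\<^sup>+ t. A s t \<partial>lborel \<partial>lborel)
      + (\<integral>\<^sup>+ s. \<integral>\<^sup>+ t. B s t \<partial>lborel \<partial>lborel) + (\<integral>\<^sup>+ s. \<integral>\<^sup>+ t. C s t \<partial>lborel \<partial>lborel)"
    by (simp add: nn_integral_add nn_integral_cmult lborel.nn_integral_fst[symmetric])
  also have "\<dots> = ennreal n * ennreal (Beta (p + 2) (real n + 1))
      + ennreal (Beta (p + 2) (real n + 1) / (p + 1)) + ennreal (Beta (p + 2) (real n + 1) / (p + 1))"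
    using nn_integral_simplex_gap[OF p n] nn_integral_simplex_top[OF p n] nn_integral_simplex_bottom[OF p n]
    by (simp add: A_def B_def C_def)
  also have "\<dots> = ennreal (n * Beta (p + 2) (real n + 1) + 2 * (Beta (p + 2) (real n + 1) / (p + 1)))"
  proof -
    have "0 \<le> Beta (p + 2) (real n + 1)" "0 \<le> Beta (p + 2) (real n + 1) / (p + 1)"
      using Beta_real_pos[of "p + 2" "real n + 1"] p by simp_all
    then show ?thesis
      by (simp only: mult_2 ennreal_mult[symmetric] ennreal_plus[symmetric] of_nat_0_le_iff
          add_nonneg_nonneg mult_nonneg_nonneg add.assoc)
  qed
  finally show ?thesis .
qed

lemma emeasure_unif01_singleton: "emeasure unif01 {c} = 0"
proof -
  have "emeasure lborel ({0..1} \<inter> {c}) \<le> emeasure lborel {c::real}" by (rule emeasure_mono) auto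
  then show ?thesis by (simp add: emeasure_uniform_measure)
qed

lemma AE_PiM_unif01_neq:
  fixes a b N :: nat
  assumes a: "a < N" and b: "b < N" and ab: "a \<noteq> b"
  shows "AE x in PiM {..<N} (\<lambda>_. unif01). x a \<noteq> x b"
proof -
  define I where "I = {..<N} - {a}"
  have N_eq: "{..<N} = insert a I" and "a \<notin> I" "finite I" using a by (auto simp: I_def)
  have [measurable]: "a \<in> insert a I" "b \<in> insert a I" using b by (auto simp: I_def)
  have meas: "(\<lambda>x. indicator {0} (x a - x b) :: ennreal) \<in> borel_measurable (PiM (insert a I) (\<lambda>_. unif01))"
    by measurable
  have "(\<integral>\<^sup>+ x. indicator {0} (x a - x b) \<partial>PiM (insert a I) (\<lambda>_. unif01))
      = (\<integral>\<^sup>+ x. emeasure unif01 {x b} \<partial>PiM I (\<lambda>_. unif01))"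
  proof (subst unif01_product.product_nn_integral_insert[OF \<open>finite I\<close> \<open>a \<notin> I\<close> meas],
      rule nn_integral_cong)
    fix x :: "nat \<Rightarrow> real"
    have "(\<lambda>y. indicator {0} ((x(a := y)) a - (x(a := y)) b) :: ennreal) = indicator {x b}"
      using ab by (auto simp: indicator_def)
    then show "(\<integral>\<^sup>+ y. indicator {0} ((x(a := y)) a - (x(a := y)) b) \<partial>unif01) = emeasure unif01 {x b}"
      by simp
  qed
  also have "\<dots> = 0" by (simp add: emeasure_unif01_singleton del: emeasure_uniform_measure)
  finally have "AE x in PiM (insert a I) (\<lambda>_. unif01). indicator {0} (x a - x b) = (0::ennreal)"
    using nn_integral_0_iff_AE[OF meas] by simp
  then show ?thesis unfolding N_eq by eventually_elim (simp add: indicator_def)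
qed

lemma AE_PiM_unif01_inj:
  fixes N :: nat
  shows "AE x in PiM {..<N} (\<lambda>_. unif01). inj_on x {..<N}"
proof -
  have "finite {(a, b). a < N \<and> b < N \<and> a \<noteq> b}"
    by (rule finite_subset[of _ "{..<N} \<times> {..<N}"]) auto
  then have "AE x in PiM {..<N} (\<lambda>_. unif01). \<forall>(a, b) \<in> {(a, b). a < N \<and> b < N \<and> a \<noteq> b}. x a \<noteq> x b"
    by (intro eventually_ball_finite) (auto intro!: AE_PiM_unif01_neq)
  then show ?thesis by eventually_elim (auto simp: inj_on_def)
qed

lemma min_cycle_cost_measurable [measurable]:
  "(\<lambda>x. min_cycle_cost p N x) \<in> borel_measurable (PiM {..<N} (\<lambda>_. unif01))"
proof -
  have "min_cycle_cost p N x = Min ((\<lambda>\<sigma>. cycle_cost p N x \<sigma>) ` {\<sigma>. \<sigma> permutes {..<N}})" for x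
    unfolding min_cycle_cost_def by (rule arg_cong[where f = Min]) auto
  moreover have "(\<lambda>x. cycle_cost p N x \<sigma>) \<in> borel_measurable (PiM {..<N} (\<lambda>_. unif01))"
    if \<sigma>: "\<sigma> permutes {..<N}" for \<sigma>
    unfolding cycle_cost_def
  proof (rule borel_measurable_sum)
    fix i assume "i \<in> {..<N}"
    then have [measurable]: "\<sigma> i \<in> {..<N}" "\<sigma> ((i + 1) mod N) \<in> {..<N}"
      using permutes_in_image[OF \<sigma>] by auto
    show "(\<lambda>x. \<bar>x (\<sigma> i) - x (\<sigma> ((i + 1) mod N))\<bar> powr p) \<in> borel_measurable (PiM {..<N} (\<lambda>_. unif01))"
      by measurable
  qed
  ultimately show ?thesis
    using finite_permutations[of "{..<N}"] by (auto intro!: borel_measurable_Min)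
qed

lemma zigzag_cost_nonneg: "zigzag_cost p z \<ge> 0"
  unfolding zigzag_cost_def edge_cost_def by (intro add_nonneg_nonneg sum_nonneg) auto

lemma expected_min_cost_eq_Beta:
  assumes p: "p \<ge> 1" and N: "N \<ge> 3"
  shows "expected_min_cost p N = real N * (real N - 1) *
     ((real N - 2) * Beta (p + 2) (real N - 1) + 2 * Beta (p + 2) (real N - 1) / (p + 1))"
proof -
  let ?P = "PiM {..<N} (\<lambda>_. unif01)"
  define K where "K = (real N - 2) * Beta (p + 2) (real N - 1) + 2 * Beta (p + 2) (real N - 1) / (p + 1)"
  have "K \<ge> 0" unfolding K_def using Beta_real_pos[of "p + 2" "real N - 1"] p N by simp
  have "real (N - 2) = real N - 2" "real (N - 2) + 1 = real N - 1" using N by (simp_all add: of_nat_diff)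
  then have pair: "(\<integral>\<^sup>+ x. ennreal (pair_contrib p N a b x) \<partial>?P) = ennreal K"
    if "a < N" "b < N" "a \<noteq> b" for a b
    using that p N nn_integral_pair_contrib nn_integral_pair_kernel[of p "N - 2"] by (simp add: K_def)
  have "AE x in ?P. ennreal (min_cycle_cost p N x) = (\<Sum>a<N. \<Sum>b\<in>{..<N} - {a}. ennreal (pair_contrib p N a b x))"
    using AE_PiM_unif01_inj[of N]
  proof eventually_elim
    case (elim x)
    then show ?case
      using min_cycle_cost_eq_zigzag_cost[OF p, of N x] zigzag_cost_sort_eq_pair_sum[OF N elim, of p] N
      by (simp add: pair_contrib_nonneg sum_nonneg)
  qed
  then have "(\<integral>\<^sup>+ x. ennreal (min_cycle_cost p N x) \<partial>?P)
      = (\<integral>\<^sup>+ x. (\<Sum>a<N. \<Sum>b\<in>{..<N} - {a}. ennreal (pair_contrib p N a b x)) \<partial>?P)"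
    by (rule nn_integral_cong_AE)
  also have "\<dots> = (\<Sum>a<N. \<Sum>b\<in>{..<N} - {a}. \<integral>\<^sup>+ x. ennreal (pair_contrib p N a b x) \<partial>?P)"
    by (subst nn_integral_sum) (auto intro!: sum.cong nn_integral_sum borel_measurable_sum)
  also have "\<dots> = (\<Sum>a<N. \<Sum>b\<in>{..<N} - {a}. ennreal K)"
    by (intro sum.cong refl pair) auto
  also have "\<dots> = ennreal (N * (N - 1) * K)"
    using N \<open>K \<ge> 0\<close> by (simp add: ennreal_of_nat_eq_real_of_nat ennreal_mult of_nat_diff mult.assoc)
  finally have "(\<integral>\<^sup>+ x. ennreal (min_cycle_cost p N x) \<partial>?P) = ennreal (N * (N - 1) * K)" .
  moreover have "expected_min_cost p N = enn2real (\<integral>\<^sup>+ x. ennreal (min_cycle_cost p N x) \<partial>?P)"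
    unfolding expected_min_cost_def unif_points_def using p N
    by (intro integral_eq_nn_integral) (auto simp: min_cycle_cost_eq_zigzag_cost zigzag_cost_nonneg)
  ultimately show ?thesis using N \<open>K \<ge> 0\<close> by (simp add: K_def)
qed

section \<open>Closed form and asymptotics\<close>

lemma Gamma_plus2: "p > -1 \<Longrightarrow> Gamma (p + 2) = (p + 1) * Gamma (p + 1 :: real)"
  using Gamma_plus1[of "p + 1"] nonpos_Ints_nonpos[of "p + 1"] by (force simp: add.assoc)

lemma Beta_expression_eq_Gamma:
  fixes p :: real and N :: nat
  assumes p: "p > -1" and N: "N \<ge> 3"
  shows "real N * (real N - 1) * ((real N - 2) * Beta (p + 2) (real N - 1) + 2 * Beta (p + 2) (real N - 1) / (p + 1))
    = ((real N - 2) * (p + 1) + 2) * (Gamma (real N + 1) * Gamma (p + 1) / Gamma (real N + p + 1))"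
proof -
  define B where "B = Beta (p + 2) (real N - 1)"
  define G where "G = Gamma (real N + 1) * Gamma (p + 1) / Gamma (real N + p + 1)"
  have "Gamma (real N + 1) = real N * Gamma (real N)"
    using Gamma_plus1[of "real N"] nonpos_Ints_nonpos[of "real N"] N by force
  moreover have "Gamma (real N) = (real N - 1) * Gamma (real N - 1)"
    using Gamma_plus1[of "real N - 1"] nonpos_Ints_nonpos[of "real N - 1"] N by force
  moreover have "B = (p + 1) * Gamma (p + 1) * Gamma (real N - 1) / Gamma (real N + p + 1)"
    using p by (simp add: B_def Beta_def Gamma_plus2 ac_simps)
  ultimately have key: "real N * (real N - 1) * B = (p + 1) * G"
    by (simp add: G_def)
  have "real N * (real N - 1) * ((real N - 2) * B + 2 * B / (p + 1))
      = (real N - 2) * (real N * (real N - 1) * B) + 2 * (real N * (real N - 1) * B) / (p + 1)"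
    by (simp add: algebra_simps)
  also have "\<dots> = (real N - 2) * ((p + 1) * G) + 2 * ((p + 1) * G) / (p + 1)"
    by (simp only: key)
  also have "\<dots> = ((real N - 2) * (p + 1) + 2) * G"
    using p by (simp add: field_simps)
  finally show ?thesis by (simp only: B_def G_def)
qed

lemma fact_powr_div_Gamma_LIMSEQ:
  fixes p :: real
  assumes p: "p > 0"
  shows "(\<lambda>N::nat. fact N * real N powr p / Gamma (real N + p + 1)) \<longlonglongrightarrow> 1"
proof -
  have "p \<notin> \<int>\<^sub>\<le>\<^sub>0" "Gamma p > 0" using p by (auto elim!: nonpos_Ints_cases)
  have "(\<lambda>N. Gamma_series p N / Gamma p) \<longlonglongrightarrow> Gamma p / Gamma p"
    by (intro tendsto_divide Gamma_series_LIMSEQ tendsto_const) (use \<open>Gamma p > 0\<close> in auto)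
  moreover have "eventually (\<lambda>N. Gamma_series p N / Gamma p = fact N * real N powr p / Gamma (real N + p + 1))
      sequentially"
    using eventually_gt_at_top[of "0::nat"]
  proof eventually_elim
    case (elim N)
    have "pochhammer p (N + 1) = Gamma (p + real (N + 1)) / Gamma p"
      by (rule pochhammer_Gamma[OF \<open>p \<notin> \<int>\<^sub>\<le>\<^sub>0\<close>])
    moreover have "exp (p * ln (real N)) = real N powr p" using elim by (simp add: powr_def)
    ultimately show ?case using \<open>Gamma p > 0\<close> unfolding Gamma_series_def
      by (simp add: field_simps add.commute add.left_commute)
  qed
  ultimately show ?thesis using \<open>Gamma p > 0\<close> by (simp add: Lim_transform_eventually)
qed

lemma closed_form_asymptotics:
  fixes p :: real
  assumes p: "p > 0"
  shows "(\<lambda>N::nat. real N powr (p - 1) *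
     (((real N - 2) * (p + 1) + 2) * (Gamma (real N + 1) * Gamma (p + 1) / Gamma (real N + p + 1))))
     \<longlonglongrightarrow> Gamma (p + 2)"
proof -
  have "(\<lambda>N::nat. (p + 1) - 2 * p / real N) \<longlonglongrightarrow> (p + 1) - 0"
    by (intro tendsto_diff tendsto_const tendsto_divide_0[OF tendsto_const]
        filterlim_at_top_imp_at_infinity[OF filterlim_real_sequentially])
  then have "(\<lambda>N::nat. (fact N * real N powr p / Gamma (real N + p + 1)) * ((p + 1) - 2 * p / real N) * Gamma (p + 1))
      \<longlonglongrightarrow> 1 * ((p + 1) - 0) * Gamma (p + 1)"
    using p by (intro tendsto_mult fact_powr_div_Gamma_LIMSEQ tendsto_const) auto
  moreover have "eventually (\<lambda>N::nat. (fact N * real N powr p / Gamma (real N + p + 1)) * ((p + 1) - 2 * p / real N)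
      * Gamma (p + 1) = real N powr (p - 1) *
        (((real N - 2) * (p + 1) + 2) * (Gamma (real N + 1) * Gamma (p + 1) / Gamma (real N + p + 1)))) sequentially"
    using eventually_gt_at_top[of "0::nat"]
  proof eventually_elim
    case (elim N)
    have "Gamma (real N + 1) = fact N" using Gamma_fact[of N, where 'a = real] by (simp add: add.commute)
    moreover have "real N powr p = real N powr (p - 1) * real N" using elim by (simp add: powr_diff)
    moreover have "Gamma (real N + p + 1) > 0" using p by (intro Gamma_real_pos) simp
    ultimately show ?case using elim by (simp add: field_simps)
  qed
  ultimately show ?thesis using p by (simp add: Gamma_plus2 Lim_transform_eventually)
qed

theorem mainTheorem11:
  fixes p :: real
  assumes "p \<ge> 1"
  shows "(\<forall>N::nat. N \<ge> 3 \<longrightarrow>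
            expected_min_cost p N =
              ((real N - 2) * (p + 1) + 2) * (Gamma (real N + 1) * Gamma (p + 1) / Gamma (real N + p + 1)))
       \<and> (\<lambda>N::nat. real N powr (p - 1) * expected_min_cost p N) \<longlonglongrightarrow> Gamma (p + 2)"
proof -
  have closed_form: "expected_min_cost p N =
      ((real N - 2) * (p + 1) + 2) * (Gamma (real N + 1) * Gamma (p + 1) / Gamma (real N + p + 1))"
    if "N \<ge> 3" for N :: nat
    using expected_min_cost_eq_Beta[OF assms that] Beta_expression_eq_Gamma[of p N] assms that by simp
  moreover have "(\<lambda>N::nat. real N powr (p - 1) * expected_min_cost p N) \<longlonglongrightarrow> Gamma (p + 2)"
    using closed_form_asymptotics[OF order_less_le_trans[OF zero_less_one assms]]
  proof (rule Lim_transform_eventually)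
    show "\<forall>\<^sub>F N in sequentially. real N powr (p - 1) *
        (((real N - 2) * (p + 1) + 2) * (Gamma (real N + 1) * Gamma (p + 1) / Gamma (real N + p + 1)))
        = real N powr (p - 1) * expected_min_cost p N"
      using eventually_ge_at_top[of "3::nat"] by eventually_elim (simp add: closed_form)
  qed
  ultimately show ?thesis by blast
qed

end
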